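(* Let $G$ be a finite cavity-monotone network and $t>0$. Then the cavity equation $\mathbf x=t\Gamma_G(\mathbf x)$ admits a unique solution $\mathbf x(t)\in[0,\infty)^{\vec E}$, and it is globally attractive: for every initial configuration $\mathbf x^0\in[0,\infty)^{\vec E}$, the iterates $(t\Gamma_G)^k(\mathbf x^0)$ converge to $\mathbf x(t)$ as $k\to\infty$.
   Context: Measures over subsets: for a finite set $E$, a measure is $\mu:2^E\to[0,\infty)$; $Z(\mathbf w)=\sum_{F\subseteq E}\mu(F)\mathbf w^F$, $\mathbf w^F=\prod_{e\in F}w_e$; the cavity ratio is $\Gamma^e_\mu(\mathbf w')=Z^{/e}(\mathbf w')/Z^{\setminus e}(\mathbf w')$ where $Z^{\setminus e}(\mathbf w')=\sum_{F\not\ni e}\mu(F)\mathbf w'^F$, $Z^{/e}(\mathbf w')=\sum_{F\not\ni e}\mu(F\cup\{e\})\mathbf w'^F$; for $\mathbf w\in[0,\infty)^E$ with $Z(\mathbf w)>0$, $\mathbb P^{\mathbf w}_\mu(\mathcal F=F)=\mu(F)\mathbf w^F/Z(\mathbf w)$ and $U_\mu(\mathbf w)=\mathbb E^{\mathbf w}_\mu|\mathcal F|$. $\mu$ is Rayleigh if for all $\mathbf w\in(0,\infty)^E$, $e\neq f$: $\mathbb P^{\mathbf w}_\mu(e,f\in\mathcal F)\le\mathbb P^{\mathbf w}_\mu(e\in\mathcal F)\mathbb P^{\mathbf w}_\mu(f\in\mathcal F)$; size-increasing if for all $\mathbf w\in(0,\infty)^E$, $e\in E$: $\mathbb E^{\mathbf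 w}_\mu[|\mathcal F|\mathbf 1_{e\in\mathcal F}]>\mathbb E^{\mathbf w}_\mu|\mathcal F|\,\mathbb P^{\mathbf w}_\mu(e\in\mathcal F)$; cavity-monotone if $\mu(\emptyset)>0$, Rayleigh and size-increasing. Networks: a network is a simple locally finite graph $G=(V,E)$ with, for each $i\in V$, a local measure $\mu_i$ over the subsets of $E_i$ (edges incident to $i$); it is cavity-monotone if every $\mu_i$ is. $\partial i$ is the set of neighbours of $i$. A configuration is $\mathbf x=(x_{i\to j})\in[0,\infty)^{\vec E}$ indexed by oriented edges. The cavity operator is $\Gamma_G(\mathbf x)=\mathbf y$ with $y_{i\to j}=\Gamma^{ij}_{\mu_i}(x_{k\to i}:k\in\partial i\setminus\{j\})$ (the variable of $\mu_i$ attached to edge $ik$ being set to $x_{k\to i}$). The cavity equation at activity $t>0$ is $\mathbf x=t\Gamma_G(\mathbf x)$. *)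

theory Defs
  imports "HOL-Analysis.Analysis"
begin

definition measure_on :: "('e set \<Rightarrow> real) \<Rightarrow> 'e set \<Rightarrow> bool" where
  "measure_on mu E \<longleftrightarrow> finite E \<and> (\<forall>F. F \<subseteq> E \<longrightarrow> mu F \<ge> 0)"

definition Zpart :: "('e set \<Rightarrow> real) \<Rightarrow> 'e set \<Rightarrow> ('e \<Rightarrow> real) \<Rightarrow> real" where
  "Zpart mu E w = (\<Sum>F\<in>Pow E. mu F * (\<Prod>e\<in>F. w e))"

definition Expect :: "('e set \<Rightarrow> real) \<Rightarrow> 'e set \<Rightarrow> ('e \<Rightarrow> real) \<Rightarrow> ('e set \<Rightarrow> real) \<Rightarrow> real" where
  "Expect mu E w g = (\<Sum>F\<in>Pow E. g F * (mu F * (\<Prod>e\<in>F. w e) / Zpart mu E w))"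

definition rayleigh :: "('e set \<Rightarrow> real) \<Rightarrow> 'e set \<Rightarrow> bool" where
  "rayleigh mu E \<longleftrightarrow>
     (\<forall>w. (\<forall>e\<in>E. w e > 0) \<longrightarrow>
        (\<forall>e\<in>E. \<forall>f\<in>E. e \<noteq> f \<longrightarrow>
           Expect mu E w (\<lambda>F. of_bool (e \<in> F \<and> f \<in> F))
             \<le> Expect mu E w (\<lambda>F. of_bool (e \<in> F)) * Expect mu E w (\<lambda>F. of_bool (f \<in> F))))"

definition size_increasing :: "('e set \<Rightarrow> real) \<Rightarrow> 'e set \<Rightarrow> bool" where
  "size_increasing mu E \<longleftrightarrow>
     (\<forall>w. (\<forall>e\<in>E. w e > 0) \<longrightarrow>
        (\<forall>e\<in>E.
           Expect mu E w (\<lambda>F. real (card F) * of_bool (e \<in> F))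
             > Expect mu E w (\<lambda>F. real (card F)) * Expect mu E w (\<lambda>F. of_bool (e \<in> F))))"

definition cavity_monotone :: "('e set \<Rightarrow> real) \<Rightarrow> 'e set \<Rightarrow> bool" where
  "cavity_monotone mu E \<longleftrightarrow>
     measure_on mu E \<and> mu {} > 0 \<and> rayleigh mu E \<and> size_increasing mu E"

definition cavity_ratio :: "('e set \<Rightarrow> real) \<Rightarrow> 'e set \<Rightarrow> 'e \<Rightarrow> ('e \<Rightarrow> real) \<Rightarrow> real" where
  "cavity_ratio mu E e w =
     (\<Sum>F\<in>Pow (E - {e}). mu (insert e F) * (\<Prod>a\<in>F. w a))
     / (\<Sum>F\<in>Pow (E - {e}). mu F * (\<Prod>a\<in>F. w a))"

definition finite_simple_graph :: "'v set \<Rightarrow> 'v set set \<Rightarrow> bool" where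
  "finite_simple_graph V E \<longleftrightarrow>
     finite V \<and> (\<forall>e\<in>E. \<exists>i j. i \<in> V \<and> j \<in> V \<and> i \<noteq> j \<and> e = {i, j})"

definition incident :: "'v set set \<Rightarrow> 'v \<Rightarrow> 'v set set" where
  "incident E i = {e \<in> E. i \<in> e}"

definition arcs :: "'v set set \<Rightarrow> ('v \<times> 'v) set" where
  "arcs E = {(i, j). {i, j} \<in> E}"

definition other_end :: "'v \<Rightarrow> 'v set \<Rightarrow> 'v" where
  "other_end i e = (THE k. e = {i, k})"

definition configs :: "'v set set \<Rightarrow> ('v \<times> 'v \<Rightarrow> real) set" where
  "configs E = {x. (\<forall>a\<in>arcs E. x a \<ge> 0) \<and> (\<forall>a. a \<notin> arcs E \<longrightarrow> x a = 0)}"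

text \<open>Cavity operator: y_{i->j} = Gamma^{ij}_{mu_i}(x_{k->i} : k in di - {j}),
  the variable of mu_i at edge ik being x_{k->i}.\<close>
definition cavity_op :: "'v set set \<Rightarrow> ('v \<Rightarrow> 'v set set \<Rightarrow> real)
    \<Rightarrow> ('v \<times> 'v \<Rightarrow> real) \<Rightarrow> ('v \<times> 'v \<Rightarrow> real)" where
  "cavity_op E mu x = (\<lambda>(i, j).
     if (i, j) \<in> arcs E
     then cavity_ratio (mu i) (incident E i) {i, j} (\<lambda>e. x (other_end i e, i))
     else 0)"

definition scaled_cavity_op :: "real \<Rightarrow> 'v set set \<Rightarrow> ('v \<Rightarrow> 'v set set \<Rightarrow> real)
    \<Rightarrow> ('v \<times> 'v \<Rightarrow> real) \<Rightarrow> ('v \<times> 'v \<Rightarrow> real)" where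
  "scaled_cavity_op t E mu x = (\<lambda>a. t * cavity_op E mu x a)"

end

theory Submission
  imports Defs
begin

(*
  Write T = t * Gamma_G.  Each coordinate of T is a cavity ratio of a local
  measure, viewed as a function of the incoming messages, and cavity-monotonicity gives
  the ratio three properties:
  (1) it is antitone in the weights (from the Rayleigh property, one coordinate at a time,
      via a cross inequality between the four restricted partition functions);
  (2) it is strictly subhomogeneous: lam * Gamma(lam * w) > Gamma(w) for lam > 1 (from the
      size-increasing property, which says that x * Gamma(x * w) has positive derivative);
  (3) it is positive and continuous on nonnegative weights.  The
  even iterates of T from 0 increase and the odd ones decrease, they bracket every orbit,
  and their limits form a 2-cycle lower <= upper; strict subhomogeneity forces
  upper = lower.
*)

section \<open>Partition functions of contracted measures\<close>

definition contract :: "('e set \<Rightarrow> real) \<Rightarrow> 'e \<Rightarrow> 'e set \<Rightarrow> real" where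
  "contract mu e F = mu (insert e F)"

lemma cavity_ratio_Zpart:
  "cavity_ratio mu E e w = Zpart (contract mu e) (E - {e}) w / Zpart mu (E - {e}) w"
  unfolding cavity_ratio_def Zpart_def contract_def ..

lemma contract_weighted: "contract (\<lambda>F. g F * nu F) x = (\<lambda>F. g (insert x F) * contract nu x F)"
  unfolding contract_def ..

lemma Zpart_cong:
  assumes "\<And>F. F \<subseteq> S \<Longrightarrow> mu F = nu F" and "\<And>a. a \<in> S \<Longrightarrow> w a = v a"
  shows "Zpart mu S w = Zpart nu S v"
  unfolding Zpart_def using assms by (intro sum.cong refl) (auto intro!: prod.cong)

lemma Zpart_vanish:
  assumes "\<And>F. F \<subseteq> S \<Longrightarrow> g F = 0"
  shows "Zpart (\<lambda>F. g F * nu F) S w = 0"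
  unfolding Zpart_def using assms by (intro sum.neutral) auto

lemma Zpart_insert:
  assumes "finite S" "x \<notin> S"
  shows "Zpart mu (insert x S) w = Zpart mu S w + w x * Zpart (contract mu x) S w"
proof -
  have inj: "inj_on (insert x) (Pow S)"
    using assms(2) unfolding inj_on_def by (metis PowD insert_ident subsetD)
  have disj: "Pow S \<inter> insert x ` Pow S = {}" using assms(2) by auto
  have prod_insert: "(\<Prod>a\<in>insert x F. w a) = w x * (\<Prod>a\<in>F. w a)" if "F \<in> Pow S" for F
    using that assms finite_subset by (subst prod.insert) auto
  have "Zpart mu (insert x S) w
      = Zpart mu S w + (\<Sum>F\<in>Pow S. mu (insert x F) * (\<Prod>a\<in>insert x F. w a))"
    unfolding Zpart_def Pow_insert using assms(1) inj disj
    by (simp add: sum.union_disjoint sum.reindex)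
  also have "\<dots> = Zpart mu S w + w x * Zpart (contract mu x) S w"
    unfolding Zpart_def contract_def sum_distrib_left
    by (intro arg_cong2[where f="(+)"] sum.cong refl) (simp add: prod_insert)
  finally show ?thesis .
qed

lemma Zpart_insert_unit:
  assumes "finite S" "x \<notin> S"
  shows "Zpart mu (insert x S) (w(x := 1)) = Zpart mu S w + Zpart (contract mu x) S w"
proof -
  have "Zpart nu S (w(x := 1)) = Zpart nu S w" for nu
    using assms(2) by (intro Zpart_cong) auto
  then show ?thesis using Zpart_insert[OF assms, of mu "w(x := 1)"] by simp
qed

lemma measure_on_subset: "measure_on mu E \<Longrightarrow> S \<subseteq> E \<Longrightarrow> measure_on mu S"
  unfolding measure_on_def by (auto intro: finite_subset)

lemma measure_on_contract: "measure_on mu E \<Longrightarrow> e \<in> E \<Longrightarrow> measure_on (contract mu e) (E - {e})"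
  unfolding measure_on_def contract_def by (auto simp: subset_iff)

lemma Zpart_nonneg:
  assumes "measure_on mu S" "\<forall>a\<in>S. 0 \<le> w a"
  shows "0 \<le> Zpart mu S w"
  unfolding Zpart_def using assms unfolding measure_on_def
  by (intro sum_nonneg mult_nonneg_nonneg prod_nonneg) auto

text \<open>The empty set alone contributes mu {} to the partition function; this is what keeps
  all denominators positive, since cavity-monotone measures have mu {} > 0.\<close>

lemma Zpart_ge_empty:
  assumes "measure_on mu S" "\<forall>a\<in>S. 0 \<le> w a"
  shows "mu {} \<le> Zpart mu S w"
proof -
  have "mu {} * (\<Prod>a\<in>{}. w a) \<le> Zpart mu S w"
    unfolding Zpart_def using assms unfolding measure_on_def
    by (intro member_le_sum mult_nonneg_nonneg prod_nonneg) (auto intro: finite_subset)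
  then show ?thesis by simp
qed

lemma Zpart_pos:
  assumes "measure_on mu S" "0 < mu {}" "\<forall>a\<in>S. 0 \<le> w a"
  shows "0 < Zpart mu S w"
  using Zpart_ge_empty[OF assms(1,3)] assms(2) by linarith

lemma Zpart_card_le:
  assumes "measure_on nu S" "\<forall>a\<in>S. 0 \<le> w a"
  shows "Zpart (\<lambda>F. real (card F) * nu F) S w \<le> real (card S) * Zpart nu S w"
  unfolding Zpart_def sum_distrib_left
proof (rule sum_mono)
  fix F assume "F \<in> Pow S"
  moreover have "finite S" using assms(1) unfolding measure_on_def by auto
  ultimately have "card F \<le> card S" "0 \<le> nu F * (\<Prod>a\<in>F. w a)"
    using assms unfolding measure_on_def by (auto intro!: card_mono mult_nonneg_nonneg prod_nonneg)
  then show "real (card F) * nu F * (\<Prod>a\<in>F. w a) \<le> real (card S) * (nu F * (\<Prod>a\<in>F. w a))"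
    by (simp add: mult.assoc mult_right_mono)
qed

lemma Zpart_tendsto:
  assumes "\<forall>a\<in>S. ((\<lambda>z. W z a) \<longlongrightarrow> w a) F"
  shows "((\<lambda>z. Zpart mu S (W z)) \<longlongrightarrow> Zpart mu S w) F"
  unfolding Zpart_def using assms by (intro tendsto_intros) auto

text \<open>Scaling all weights by y turns Z into a polynomial in y, and y * d/dy counts the size
  of the random set: this is how the size-increasing property enters.\<close>

lemma Zpart_scale_deriv:
  fixes x :: real
  assumes "0 < x"
  shows "((\<lambda>y. Zpart nu S (\<lambda>a. y * w a)) has_real_derivative
           Zpart (\<lambda>F. real (card F) * nu F) S (\<lambda>a. x * w a) / x) (at x)"
proof -
  have poly: "Zpart nu S (\<lambda>a. y * w a) = (\<Sum>F\<in>Pow S. nu F * (\<Prod>a\<in>F. w a) * y ^ card F)" for y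
    unfolding Zpart_def by (simp add: prod.distrib mult_ac)
  have "((\<lambda>y. \<Sum>F\<in>Pow S. nu F * (\<Prod>a\<in>F. w a) * y ^ card F) has_real_derivative
      (\<Sum>F\<in>Pow S. nu F * (\<Prod>a\<in>F. w a) * (real (card F) * x ^ (card F - 1)))) (at x)"
    by (auto intro!: derivative_eq_intros sum.cong simp: mult_ac)
  moreover have "(\<Sum>F\<in>Pow S. nu F * (\<Prod>a\<in>F. w a) * (real (card F) * x ^ (card F - 1)))
      = Zpart (\<lambda>F. real (card F) * nu F) S (\<lambda>a. x * w a) / x"
    unfolding Zpart_def sum_divide_distrib using assms
    by (intro sum.cong refl) (auto simp: prod.distrib power_eq_if)
  ultimately show ?thesis unfolding poly by simp
qed

lemma Expect_Zpart: "Expect mu E w g = Zpart (\<lambda>F. g F * mu F) E w / Zpart mu E w"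
  unfolding Expect_def Zpart_def by (simp add: sum_divide_distrib mult.assoc)

section \<open>The Rayleigh property: the cavity ratio is antitone\<close>

text \<open>In terms of the four restricted partition functions c0, cf, ce, cef of the sets
  containing neither, only f, only e, or both of e and f, negative correlation of the events
  e \<in> F and f \<in> F is the cross inequality cef c0 \<le> ce cf.\<close>

lemma negative_correlation_cross:
  fixes c0 cf ce cef :: real
  assumes Z: "0 < c0 + cf + ce + cef"
    and corr: "cef / (c0 + cf + ce + cef)
      \<le> (ce + cef) / (c0 + cf + ce + cef) * ((cf + cef) / (c0 + cf + ce + cef))"
  shows "cef * c0 \<le> ce * cf"
proof -
  have "cef * (c0 + cf + ce + cef) \<le> (ce + cef) * (cf + cef)"
    using Z corr by (simp add: divide_simps power2_eq_square split: if_splits)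
  then show ?thesis by (simp add: algebra_simps)
qed

text \<open>Evaluating the Rayleigh inequality for e, f at the weights w on R = E - {e, f} and 1 on
  e, f and expanding all partition functions over R gives Z_ef Z_0 \<le> Z_e Z_f.\<close>

lemma rayleigh_cross_ineq:
  assumes cm: "cavity_monotone mu E" and e: "e \<in> E" and f: "f \<in> E" "f \<noteq> e"
    and wpos: "\<forall>a\<in>E - {e, f}. 0 < w a"
  defines "R \<equiv> E - {e, f}"
  shows "Zpart (contract (contract mu e) f) R w * Zpart mu R w
       \<le> Zpart (contract mu e) R w * Zpart (contract mu f) R w"
proof -
  have ms: "measure_on mu E" and m0: "0 < mu {}" and ray: "rayleigh mu E"
    using cm unfolding cavity_monotone_def by auto
  have finR: "finite R" using ms unfolding measure_on_def R_def by auto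
  have E_eq: "E = insert e (insert f R)" and eR: "e \<notin> insert f R" and fR: "f \<notin> R"
    using e f unfolding R_def by auto
  define v where "v = w(f := 1, e := 1)"
  have vpos: "\<forall>a\<in>E. 0 < v a" using wpos unfolding v_def R_def by auto
  have expand: "Zpart nu E v = Zpart nu R w + Zpart (contract nu f) R w
      + Zpart (contract nu e) R w + Zpart (contract (contract nu e) f) R w" for nu
    unfolding E_eq v_def using finR eR fR by (simp add: Zpart_insert_unit)
  define c0 ce cf cef where "c0 = Zpart mu R w" and "ce = Zpart (contract mu e) R w"
    and "cf = Zpart (contract mu f) R w" and "cef = Zpart (contract (contract mu e) f) R w"
  have notin_R: "F \<subseteq> R \<Longrightarrow> e \<notin> F" "F \<subseteq> R \<Longrightarrow> f \<notin> F" for F using eR fR by auto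
  have Z: "Zpart mu E v = c0 + cf + ce + cef"
    unfolding expand c0_def ce_def cf_def cef_def ..
  have Zef: "Zpart (\<lambda>F. of_bool (e \<in> F \<and> f \<in> F) * mu F) E v = cef"
    unfolding expand cef_def using f(2) by (simp add: contract_weighted Zpart_vanish notin_R)
  have Ze: "Zpart (\<lambda>F. of_bool (e \<in> F) * mu F) E v = ce + cef"
    unfolding expand ce_def cef_def using f(2) by (simp add: contract_weighted Zpart_vanish notin_R)
  have Zf: "Zpart (\<lambda>F. of_bool (f \<in> F) * mu F) E v = cf + cef"
    unfolding expand cf_def cef_def using f(2) by (simp add: contract_weighted Zpart_vanish notin_R)
  have "0 < c0 + cf + ce + cef"
    unfolding Z[symmetric] using vpos by (intro Zpart_pos[OF ms m0]) (auto intro: less_imp_le)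
  moreover have "cef / (c0 + cf + ce + cef)
      \<le> (ce + cef) / (c0 + cf + ce + cef) * ((cf + cef) / (c0 + cf + ce + cef))"
    using ray[unfolded rayleigh_def, rule_format, of v e f] vpos e f
    unfolding Expect_Zpart Z Ze Zf Zef by auto
  ultimately show ?thesis unfolding c0_def ce_def cf_def cef_def by (rule negative_correlation_cross)
qed

text \<open>As a function of a single weight s the cavity ratio is the Moebius map
  (ce + s cef) / (c0 + s cf), which is antitone exactly when cef c0 \<le> ce cf.\<close>

lemma linear_fractional_antitone:
  fixes c0 cf ce cef s s' :: real
  assumes "0 < c0" "0 \<le> cf" "cef * c0 \<le> ce * cf" "0 \<le> s" "s \<le> s'"
  shows "(ce + s' * cef) / (c0 + s' * cf) \<le> (ce + s * cef) / (c0 + s * cf)"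
proof -
  have den: "0 < c0 + s * cf" "0 < c0 + s' * cf" using assms by (simp_all add: add_pos_nonneg)
  have "0 \<le> (s' - s) * (ce * cf - cef * c0)" using assms by simp
  then have "(ce + s' * cef) * (c0 + s * cf) \<le> (ce + s * cef) * (c0 + s' * cf)"
    by (simp add: algebra_simps)
  then show ?thesis using den by (simp add: divide_simps)
qed

lemma cavity_ratio_coord_antitone:
  assumes cm: "cavity_monotone mu E" and e: "e \<in> E" and f: "f \<in> E" "f \<noteq> e"
    and wpos: "\<forall>a\<in>E - {e, f}. 0 < w a" and s: "0 \<le> s" "s \<le> s'"
  shows "cavity_ratio mu E e (w(f := s')) \<le> cavity_ratio mu E e (w(f := s))"
proof -
  have ms: "measure_on mu E" and m0: "0 < mu {}"
    using cm unfolding cavity_monotone_def by auto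
  define R where "R = E - {e, f}"
  have finR: "finite R" using ms unfolding measure_on_def R_def by auto
  have Ee: "E - {e} = insert f R" and fR: "f \<notin> R" using e f unfolding R_def by auto
  have w0: "\<forall>a\<in>R. 0 \<le> w a" using wpos unfolding R_def by (auto intro: less_imp_le)
  define c0 ce cf cef where "c0 = Zpart mu R w" and "ce = Zpart (contract mu e) R w"
    and "cf = Zpart (contract mu f) R w" and "cef = Zpart (contract (contract mu e) f) R w"
  have update_R: "Zpart nu R (w(f := r)) = Zpart nu R w" for nu r
    using fR by (intro Zpart_cong) auto
  have ratio: "cavity_ratio mu E e (w(f := r)) = (ce + r * cef) / (c0 + r * cf)" for r
    unfolding cavity_ratio_Zpart Ee c0_def ce_def cf_def cef_def
    using finR fR by (simp add: Zpart_insert update_R)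
  have "0 < c0"
    unfolding c0_def by (rule Zpart_pos[OF measure_on_subset[OF ms] m0 w0]) (auto simp: R_def)
  moreover have "0 \<le> cf"
    unfolding cf_def
    by (rule Zpart_nonneg[OF measure_on_subset[OF measure_on_contract[OF ms f(1)]] w0])
      (auto simp: R_def)
  moreover have "cef * c0 \<le> ce * cf"
    using rayleigh_cross_ineq[OF cm e f wpos] unfolding c0_def ce_def cf_def cef_def R_def .
  ultimately show ?thesis unfolding ratio using s by (intro linear_fractional_antitone)
qed

lemma cavity_ratio_cong:
  assumes "\<forall>a\<in>E - {e}. w a = w' a"
  shows "cavity_ratio mu E e w = cavity_ratio mu E e w'"
  unfolding cavity_ratio_Zpart using assms by (intro arg_cong2[where f="(/)"] Zpart_cong) auto

text \<open>Antitonicity for positive weights: raise the weights to w' one coordinate at a time.\<close>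

lemma cavity_ratio_antitone_pos:
  assumes cm: "cavity_monotone mu E" and e: "e \<in> E"
    and wpos: "\<forall>a\<in>E - {e}. 0 < w a" and le: "\<forall>a\<in>E - {e}. w a \<le> w' a"
  shows "cavity_ratio mu E e w' \<le> cavity_ratio mu E e w"
proof -
  have finE: "finite E" using cm unfolding cavity_monotone_def measure_on_def by auto
  define mix where "mix S = (\<lambda>a. if a \<in> S then w' a else w a)" for S
  have "cavity_ratio mu E e (mix S) \<le> cavity_ratio mu E e w" if "S \<subseteq> E - {e}" for S
    using finite_subset[OF that finite_Diff[OF finE]] that
  proof (induction S rule: finite_induct)
    case empty
    show ?case by (simp add: mix_def)
  next
    case (insert f S)
    have f: "f \<in> E" "f \<noteq> e" using insert.prems by auto
    have mix_pos: "\<forall>a\<in>E - {e, f}. 0 < mix S a"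
      using wpos le unfolding mix_def by (auto intro: less_le_trans)
    have "cavity_ratio mu E e ((mix S)(f := w' f)) \<le> cavity_ratio mu E e ((mix S)(f := w f))"
      by (rule cavity_ratio_coord_antitone[OF cm e f mix_pos]) (use wpos le f in \<open>auto intro: less_imp_le\<close>)
    moreover have "mix (insert f S) = (mix S)(f := w' f)" "mix S = (mix S)(f := w f)"
      using insert.hyps(2) unfolding mix_def by auto
    ultimately have "cavity_ratio mu E e (mix (insert f S)) \<le> cavity_ratio mu E e (mix S)"
      by metis
    then show ?case using insert.IH insert.prems by fastforce
  qed
  from this[of "E - {e}"] show ?thesis
    using cavity_ratio_cong[of E e "mix (E - {e})" w' mu] unfolding mix_def by auto
qed

lemma cavity_ratio_tendsto:
  assumes cm: "cavity_monotone mu E" and e: "e \<in> E"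
    and w0: "\<forall>a\<in>E - {e}. 0 \<le> w a"
    and lim: "\<forall>a\<in>E - {e}. ((\<lambda>z. W z a) \<longlongrightarrow> w a) F"
  shows "((\<lambda>z. cavity_ratio mu E e (W z)) \<longlongrightarrow> cavity_ratio mu E e w) F"
proof -
  have ms: "measure_on mu E" and m0: "0 < mu {}" using cm unfolding cavity_monotone_def by auto
  have "0 < Zpart mu (E - {e}) w"
    by (rule Zpart_pos[OF measure_on_subset[OF ms] m0 w0]) auto
  then show ?thesis
    unfolding cavity_ratio_Zpart using lim by (intro tendsto_divide Zpart_tendsto) auto
qed

text \<open>Antitonicity for nonnegative weights, by shifting both weight vectors by z > 0 and
  letting z tend to 0.\<close>

lemma cavity_ratio_antitone:
  assumes cm: "cavity_monotone mu E" and e: "e \<in> E"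
    and w0: "\<forall>a\<in>E - {e}. 0 \<le> w a" and le: "\<forall>a\<in>E - {e}. w a \<le> w' a"
  shows "cavity_ratio mu E e w' \<le> cavity_ratio mu E e w"
proof (rule tendsto_le[of "at_right 0"])
  have w0': "\<forall>a\<in>E - {e}. 0 \<le> w' a" using w0 le by (meson order_trans)
  show "((\<lambda>z. cavity_ratio mu E e (\<lambda>a. w a + z)) \<longlongrightarrow> cavity_ratio mu E e w) (at_right 0)"
    by (rule cavity_ratio_tendsto[OF cm e w0]) (auto intro!: tendsto_eq_intros)
  show "((\<lambda>z. cavity_ratio mu E e (\<lambda>a. w' a + z)) \<longlongrightarrow> cavity_ratio mu E e w') (at_right 0)"
    by (rule cavity_ratio_tendsto[OF cm e w0']) (auto intro!: tendsto_eq_intros)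
  show "\<forall>\<^sub>F z in at_right 0. cavity_ratio mu E e (\<lambda>a. w' a + z) \<le> cavity_ratio mu E e (\<lambda>a. w a + z)"
    using eventually_at_right_less[of 0]
  proof (rule eventually_mono)
    fix z :: real assume "0 < z"
    then show "cavity_ratio mu E e (\<lambda>a. w' a + z) \<le> cavity_ratio mu E e (\<lambda>a. w a + z)"
      using w0 le by (intro cavity_ratio_antitone_pos[OF cm e]) (auto simp: add_nonneg_pos)
  qed
qed simp

section \<open>The size-increasing property: positivity and strict subhomogeneity\<close>

text \<open>With B, A the partition functions of the sets not containing, resp. containing, e, and
  B1, A1 the same sums weighted by the size of the set after removing e, positive correlation
  of the size with the event e \<in> F is the inequality (A1 + A) B > B1 A.\<close>

lemma size_correlation_cross:
  fixes A A1 B B1 :: real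
  assumes Z: "0 < B + A" and corr: "(B1 + (A1 + A)) / (B + A) * (A / (B + A)) < (A1 + A) / (B + A)"
  shows "B1 * A < (A1 + A) * B"
proof -
  have "(B1 + (A1 + A)) * A < (A1 + A) * (B + A)"
    using Z corr by (simp add: divide_simps power2_eq_square split: if_splits)
  then show ?thesis by (simp add: algebra_simps)
qed

text \<open>Evaluating the size-increasing inequality for e at the weights w on R = E - {e} and 1 on
  e gives (A1 + A) B > B1 A, where A, B are the partition functions of the contraction and of
  mu over R, and A1, B1 the same sums weighted by the size of the set.\<close>

lemma size_increasing_ineq:
  assumes cm: "cavity_monotone mu E" and e: "e \<in> E" and wpos: "\<forall>a\<in>E - {e}. 0 < w a"
  defines "R \<equiv> E - {e}"
  shows "Zpart (\<lambda>F. real (card F) * mu F) R w * Zpart (contract mu e) R w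
       < (Zpart (\<lambda>F. real (card F) * contract mu e F) R w + Zpart (contract mu e) R w)
         * Zpart mu R w"
proof -
  have ms: "measure_on mu E" and m0: "0 < mu {}" and si: "size_increasing mu E"
    using cm unfolding cavity_monotone_def by auto
  have finR: "finite R" using ms unfolding measure_on_def R_def by auto
  have E_eq: "E = insert e R" and eR: "e \<notin> R" using e unfolding R_def by auto
  define v where "v = w(e := 1)"
  have vpos: "\<forall>a\<in>E. 0 < v a" using wpos unfolding v_def R_def by auto
  have expand: "Zpart nu E v = Zpart nu R w + Zpart (contract nu e) R w" for nu
    unfolding E_eq v_def using finR eR by (rule Zpart_insert_unit)
  define A A1 B B1 where "A = Zpart (contract mu e) R w"
    and "A1 = Zpart (\<lambda>F. real (card F) * contract mu e F) R w"
    and "B = Zpart mu R w" and "B1 = Zpart (\<lambda>F. real (card F) * mu F) R w"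
  have notin_R: "F \<subseteq> R \<Longrightarrow> e \<notin> F" for F using eR by auto
  have card_insert: "Zpart (\<lambda>F. real (card (insert e F)) * contract mu e F) R w = A1 + A"
  proof -
    have "Zpart (\<lambda>F. real (card (insert e F)) * contract mu e F) R w
        = Zpart (\<lambda>F. real (card F) * contract mu e F + contract mu e F) R w"
      using finR notin_R by (intro Zpart_cong) (auto simp: finite_subset distrib_right)
    then show ?thesis unfolding A_def A1_def Zpart_def by (simp add: distrib_right sum.distrib)
  qed
  have Z: "Zpart mu E v = B + A" unfolding expand A_def B_def ..
  have Ze: "Zpart (\<lambda>F. of_bool (e \<in> F) * mu F) E v = A"
    unfolding expand A_def by (simp add: contract_weighted Zpart_vanish notin_R)
  have Zcard: "Zpart (\<lambda>F. real (card F) * mu F) E v = B1 + (A1 + A)"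
    unfolding expand B1_def by (simp add: contract_weighted card_insert)
  have Zcard_e: "Zpart (\<lambda>F. (real (card F) * of_bool (e \<in> F)) * mu F) E v = A1 + A"
    unfolding expand by (simp add: contract_weighted Zpart_vanish notin_R card_insert)
  have "0 < B + A"
    unfolding Z[symmetric] using vpos by (intro Zpart_pos[OF ms m0]) (auto intro: less_imp_le)
  moreover have "(B1 + (A1 + A)) / (B + A) * (A / (B + A)) < (A1 + A) / (B + A)"
    using si[unfolded size_increasing_def, rule_format, of v e] vpos e
    unfolding Expect_Zpart Z Ze Zcard Zcard_e by auto
  ultimately show ?thesis unfolding A_def A1_def B_def B1_def by (rule size_correlation_cross)
qed

text \<open>For positive weights the numerator of the cavity ratio is positive: otherwise the
  size-increasing inequality (A1 + A) B > B1 A \<ge> 0 would fail, since A1 \<le> |R| A.\<close>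

lemma cavity_numerator_pos:
  assumes cm: "cavity_monotone mu E" and e: "e \<in> E" and wpos: "\<forall>a\<in>E - {e}. 0 < w a"
  shows "0 < Zpart (contract mu e) (E - {e}) w"
proof -
  have ms: "measure_on mu E" and m0: "0 < mu {}" using cm unfolding cavity_monotone_def by auto
  define R where "R = E - {e}"
  have w0: "\<forall>a\<in>R. 0 \<le> w a" using wpos unfolding R_def by (auto intro: less_imp_le)
  have msR: "measure_on mu R" and mse: "measure_on (contract mu e) R"
    using measure_on_subset[OF ms] measure_on_contract[OF ms e] unfolding R_def by auto
  define A A1 B B1 where "A = Zpart (contract mu e) R w"
    and "A1 = Zpart (\<lambda>F. real (card F) * contract mu e F) R w"
    and "B = Zpart mu R w" and "B1 = Zpart (\<lambda>F. real (card F) * mu F) R w"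
  have si: "B1 * A < (A1 + A) * B"
    using size_increasing_ineq[OF cm e wpos] unfolding A_def A1_def B_def B1_def R_def .
  have "0 \<le> B1 * A" unfolding A_def B1_def
    by (intro mult_nonneg_nonneg Zpart_nonneg[OF mse w0] Zpart_nonneg w0)
      (use msR in \<open>auto simp: measure_on_def\<close>)
  with si have "0 < (A1 + A) * B" by linarith
  moreover have "0 < B" unfolding B_def by (rule Zpart_pos[OF msR m0 w0])
  ultimately have "0 < A1 + A" by (simp add: zero_less_mult_iff)
  moreover have "A1 \<le> real (card R) * A" unfolding A1_def A_def by (rule Zpart_card_le[OF mse w0])
  ultimately have "0 < (real (card R) + 1) * A" by (simp add: algebra_simps)
  then show ?thesis unfolding A_def R_def by (simp add: zero_less_mult_iff)
qed

lemma cavity_ratio_pos: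
  assumes cm: "cavity_monotone mu E" and e: "e \<in> E" and w0: "\<forall>a\<in>E - {e}. 0 \<le> w a"
  shows "0 < cavity_ratio mu E e w"
proof -
  have ms: "measure_on mu E" and m0: "0 < mu {}" using cm unfolding cavity_monotone_def by auto
  define w' where "w' a = w a + 1" for a
  have w'pos: "\<forall>a\<in>E - {e}. 0 < w' a" using w0 unfolding w'_def by (simp add: add_nonneg_pos)
  have "0 < Zpart mu (E - {e}) w'"
    using w'pos by (intro Zpart_pos[OF measure_on_subset[OF ms] m0]) (auto intro: less_imp_le)
  then have "0 < cavity_ratio mu E e w'"
    unfolding cavity_ratio_Zpart using cavity_numerator_pos[OF cm e w'pos] by simp
  also have "\<dots> \<le> cavity_ratio mu E e w"
    by (rule cavity_ratio_antitone[OF cm e w0]) (auto simp: w'_def)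
  finally show ?thesis .
qed

text \<open>Strict subhomogeneity: h(y) = y * Gamma(y w) = y A(y) / B(y) has derivative
  ((A + y A') B - y A B') / B^2, whose numerator is positive by the size-increasing
  inequality at the weights y w, because y A' = A1(y) and y B' = B1(y).\<close>

lemma cavity_ratio_strict_subhomogeneous:
  assumes cm: "cavity_monotone mu E" and e: "e \<in> E"
    and wpos: "\<forall>a\<in>E - {e}. 0 < w a" and lam: "1 < lam"
  shows "cavity_ratio mu E e w < lam * cavity_ratio mu E e (\<lambda>a. lam * w a)"
proof -
  have ms: "measure_on mu E" and m0: "0 < mu {}" using cm unfolding cavity_monotone_def by auto
  define R where "R = E - {e}"
  define A A1 B B1 where "A y = Zpart (contract mu e) R (\<lambda>a. y * w a)"
    and "A1 y = Zpart (\<lambda>F. real (card F) * contract mu e F) R (\<lambda>a. y * w a)"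
    and "B y = Zpart mu R (\<lambda>a. y * w a)"
    and "B1 y = Zpart (\<lambda>F. real (card F) * mu F) R (\<lambda>a. y * w a)" for y
  define h where "h y = y * A y / B y" for y
  have h_ratio: "h y = y * cavity_ratio mu E e (\<lambda>a. y * w a)" for y
    unfolding h_def A_def B_def cavity_ratio_Zpart R_def by simp
  have "h 1 < h lam"
  proof (rule DERIV_pos_imp_increasing[OF lam])
    fix y :: real assume "1 \<le> y" "y \<le> lam"
    then have y: "0 < y" by linarith
    have ywpos: "\<forall>a\<in>E - {e}. 0 < y * w a" using wpos y by simp
    have B: "0 < B y"
      unfolding B_def R_def using ywpos
      by (intro Zpart_pos[OF measure_on_subset[OF ms] m0]) (auto intro: less_imp_le)
    have si: "B1 y * A y < (A1 y + A y) * B y"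
      using size_increasing_ineq[OF cm e ywpos] unfolding A_def A1_def B_def B1_def R_def .
    have dA: "(A has_real_derivative A1 y / y) (at y)"
      unfolding A_def A1_def by (rule Zpart_scale_deriv[OF y])
    have dB: "(B has_real_derivative B1 y / y) (at y)"
      unfolding B_def B1_def by (rule Zpart_scale_deriv[OF y])
    have "(h has_real_derivative
        ((y * (A1 y / y) + 1 * A y) * B y - y * A y * (B1 y / y)) / (B y * B y)) (at y)"
      unfolding h_def using B by (intro DERIV_divide DERIV_mult' DERIV_ident dA dB) simp
    moreover have "0 < ((y * (A1 y / y) + 1 * A y) * B y - y * A y * (B1 y / y)) / (B y * B y)"
      using si y B by (simp add: algebra_simps)
    ultimately show "\<exists>d. (h has_real_derivative d) (at y) \<and> d > 0" by blast
  qed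
  then show ?thesis unfolding h_ratio by simp
qed

section \<open>Fixed points of antitone strictly subhomogeneous maps\<close>

text \<open>Nonnegative real functions supported by D; with D the set of oriented edges these
  are exactly the configurations of a network.\<close>

definition nonneg_supported :: "'a set \<Rightarrow> ('a \<Rightarrow> real) set" where
  "nonneg_supported D = {x. (\<forall>a\<in>D. 0 \<le> x a) \<and> (\<forall>a. a \<notin> D \<longrightarrow> x a = 0)}"

lemma nonneg_supported_nonneg: "x \<in> nonneg_supported D \<Longrightarrow> 0 \<le> x a"
  unfolding nonneg_supported_def by (cases "a \<in> D") auto

lemma nonneg_supported_limit:
  assumes "\<And>k. xs k \<in> nonneg_supported D" and "\<And>a. (\<lambda>k. xs k a) \<longlonglongrightarrow> x a"
  shows "x \<in> nonneg_supported D"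
proof -
  have "0 \<le> x a" for a
    by (rule LIMSEQ_le_const[OF assms(2)]) (intro exI[of _ 0] allI impI nonneg_supported_nonneg[OF assms(1)])
  moreover have "x a = 0" if "a \<notin> D" for a
  proof -
    have "(\<lambda>k. xs k a) = (\<lambda>k. 0)" using assms(1) that unfolding nonneg_supported_def by auto
    then show ?thesis using assms(2)[of a] LIMSEQ_unique tendsto_const by metis
  qed
  ultimately show ?thesis unfolding nonneg_supported_def by blast
qed

locale antitone_subhomogeneous =
  fixes D :: "'a set" and T :: "('a \<Rightarrow> real) \<Rightarrow> 'a \<Rightarrow> real"
  assumes finite_D: "finite D"
    and T_closed: "x \<in> nonneg_supported D \<Longrightarrow> T x \<in> nonneg_supported D"
    and T_pos: "x \<in> nonneg_supported D \<Longrightarrow> a \<in> D \<Longrightarrow> 0 < T x a"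
    and T_antitone: "x \<in> nonneg_supported D \<Longrightarrow> y \<in> nonneg_supported D \<Longrightarrow> x \<le> y \<Longrightarrow> T y \<le> T x"
    and T_continuous: "x \<in> nonneg_supported D \<Longrightarrow> (\<And>a. (\<lambda>k. xs k a) \<longlonglongrightarrow> x a)
      \<Longrightarrow> (\<lambda>k. T (xs k) a) \<longlonglongrightarrow> T x a"
    and T_subhomogeneous: "x \<in> nonneg_supported D \<Longrightarrow> \<forall>a\<in>D. 0 < x a \<Longrightarrow> 1 < lam \<Longrightarrow> a \<in> D
      \<Longrightarrow> T x a < lam * T (\<lambda>b. lam * x b) a"
begin

abbreviation C where "C \<equiv> nonneg_supported D"

lemma iterate_closed: "x \<in> C \<Longrightarrow> (T ^^ n) x \<in> C"
  by (induction n) (auto intro: T_closed)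

lemma zero_in_C: "(\<lambda>_. 0) \<in> C"
  unfolding nonneg_supported_def by simp

lemma zero_le: "x \<in> C \<Longrightarrow> (\<lambda>_. 0) \<le> x"
  by (simp add: le_fun_def nonneg_supported_nonneg)

text \<open>Two applications of an antitone map give a monotone one.\<close>

lemma even_iterate_mono:
  assumes "x \<in> C" "y \<in> C" "x \<le> y"
  shows "(T ^^ (2 * k)) x \<le> (T ^^ (2 * k)) y"
proof (induction k)
  case (Suc k)
  have step: "T ((T ^^ (2 * k)) y) \<le> T ((T ^^ (2 * k)) x)"
    by (rule T_antitone) (use Suc.IH assms in \<open>auto intro: iterate_closed\<close>)
  have "T (T ((T ^^ (2 * k)) x)) \<le> T (T ((T ^^ (2 * k)) y))"
    by (rule T_antitone) (use step assms in \<open>auto intro: T_closed iterate_closed\<close>)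
  then show ?case by simp
qed (use assms in simp)

definition z :: "nat \<Rightarrow> 'a \<Rightarrow> real" where "z n = (T ^^ n) (\<lambda>_. 0)"

lemma z_in_C: "z n \<in> C"
  unfolding z_def by (rule iterate_closed[OF zero_in_C])

lemma z_Suc: "z (Suc n) = T (z n)"
  unfolding z_def by simp

text \<open>Every orbit is eventually squeezed between an even and the next odd iterate of zero,
  since 0 is the least element of C.\<close>

lemma iterate_bracket:
  assumes "y \<in> C" "2 * k + 1 \<le> m"
  shows "z (2 * k) \<le> (T ^^ m) y \<and> (T ^^ m) y \<le> z (2 * k + 1)"
proof
  have "(T ^^ m) y = (T ^^ (2 * k + (m - 2 * k))) y" using assms(2) by simp
  also have "\<dots> = (T ^^ (2 * k)) ((T ^^ (m - 2 * k)) y)" by (simp only: funpow_add o_apply)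
  finally have "(T ^^ m) y = (T ^^ (2 * k)) ((T ^^ (m - 2 * k)) y)" .
  moreover have "z (2 * k) \<le> (T ^^ (2 * k)) ((T ^^ (m - 2 * k)) y)"
    unfolding z_def using assms(1)
    by (intro even_iterate_mono zero_in_C iterate_closed zero_le)
  ultimately show "z (2 * k) \<le> (T ^^ m) y" by simp
next
  have "(T ^^ m) y = (T ^^ Suc (2 * k + (m - (2 * k + 1)))) y" using assms(2) by simp
  also have "\<dots> = T ((T ^^ (2 * k)) ((T ^^ (m - (2 * k + 1))) y))" by (simp add: funpow_add)
  finally have "(T ^^ m) y = T ((T ^^ (2 * k)) ((T ^^ (m - (2 * k + 1))) y))" .
  moreover have "z (2 * k) \<le> (T ^^ (2 * k)) ((T ^^ (m - (2 * k + 1))) y)"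
    unfolding z_def using assms(1)
    by (intro even_iterate_mono zero_in_C iterate_closed zero_le)
  ultimately show "(T ^^ m) y \<le> z (2 * k + 1)"
    using z_Suc[of "2 * k"] assms(1) by (simp add: T_antitone iterate_closed z_in_C)
qed

lemma z_even_incseq: "incseq (\<lambda>k. z (2 * k) a)"
proof (rule incseq_SucI)
  fix k show "z (2 * k) a \<le> z (2 * Suc k) a"
    using iterate_bracket[OF zero_in_C, of k "2 * Suc k"] unfolding z_def by (simp add: le_fun_def)
qed

lemma z_odd_decseq: "decseq (\<lambda>k. z (2 * k + 1) a)"
proof (rule decseq_SucI)
  fix k show "z (2 * Suc k + 1) a \<le> z (2 * k + 1) a"
    using iterate_bracket[OF zero_in_C, of k "2 * Suc k + 1"] unfolding z_def by (simp add: le_fun_def)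
qed

lemma z_even_le_odd: "z (2 * k) \<le> z (2 * k + 1)"
  using iterate_bracket[OF zero_in_C, of k "2 * k + 1"] unfolding z_def by simp

lemma z_le_z1: "z (Suc m) \<le> z 1"
  using iterate_bracket[OF zero_in_C, of 0 "Suc m"] unfolding z_def by simp

definition lower :: "'a \<Rightarrow> real" where "lower a = lim (\<lambda>k. z (2 * k) a)"
definition upper :: "'a \<Rightarrow> real" where "upper a = lim (\<lambda>k. z (2 * k + 1) a)"

lemma lower_lim: "(\<lambda>k. z (2 * k) a) \<longlonglongrightarrow> lower a"
proof -
  have "z (2 * k) a \<le> z 1 a" for k
    using z_even_le_odd[of k] z_le_z1[of "2 * k"] by (simp add: le_fun_def) (meson order_trans)
  then obtain L where "(\<lambda>k. z (2 * k) a) \<longlonglongrightarrow> L"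
    using incseq_convergent[OF z_even_incseq] by blast
  then show ?thesis unfolding lower_def by (simp add: limI)
qed

lemma upper_lim: "(\<lambda>k. z (2 * k + 1) a) \<longlonglongrightarrow> upper a"
proof -
  have "0 \<le> z (2 * k + 1) a" for k by (rule nonneg_supported_nonneg[OF z_in_C])
  then obtain L where "(\<lambda>k. z (2 * k + 1) a) \<longlonglongrightarrow> L"
    using decseq_convergent[OF z_odd_decseq] by blast
  then show ?thesis unfolding upper_def by (simp add: limI)
qed

lemma lower_in_C: "lower \<in> C"
  by (rule nonneg_supported_limit[OF z_in_C lower_lim])

lemma upper_in_C: "upper \<in> C"
  by (rule nonneg_supported_limit[OF z_in_C upper_lim])

lemma upper_eq: "upper = T lower"
proof
  fix a
  have "(\<lambda>k. T (z (2 * k)) a) \<longlonglongrightarrow> T lower a"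
    by (rule T_continuous[OF lower_in_C lower_lim])
  then show "upper a = T lower a" using upper_lim[of a] LIMSEQ_unique by (simp add: z_Suc)
qed

lemma lower_eq: "lower = T upper"
proof
  fix a
  have "(\<lambda>k. T (z (2 * k + 1)) a) \<longlonglongrightarrow> T upper a"
    by (rule T_continuous[OF upper_in_C upper_lim])
  moreover have "(\<lambda>k. T (z (2 * k + 1)) a) = (\<lambda>k. z (2 * Suc k) a)" by (simp add: z_Suc)
  ultimately show "lower a = T upper a" using LIMSEQ_Suc[OF lower_lim] LIMSEQ_unique by metis
qed

lemma lower_pos: "a \<in> D \<Longrightarrow> 0 < lower a"
proof -
  assume a: "a \<in> D"
  have "0 < z (2 * 1) a" using T_pos[OF z_in_C a, of 1] by (simp add: z_Suc numeral_2_eq_2)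
  moreover have "z (2 * 1) a \<le> lower a" by (rule incseq_le[OF z_even_incseq lower_lim])
  ultimately show ?thesis by linarith
qed

lemma two_cycle_strict:
  assumes u: "u \<in> C" "\<forall>a\<in>D. 0 < u a" and v: "v \<in> C"
    and cycle: "v = T u" "u = T v" and lam: "1 < lam" and le: "v \<le> (\<lambda>b. lam * u b)"
    and a: "a \<in> D"
  shows "v a < lam * u a"
proof -
  have "(\<lambda>b. lam * u b) \<in> C"
    using u lam unfolding nonneg_supported_def by auto
  then have "T (\<lambda>b. lam * u b) \<le> u" using T_antitone[OF v _ le] cycle(2) by simp
  then have "lam * T (\<lambda>b. lam * u b) a \<le> lam * u a" using lam by (simp add: le_fun_def)
  moreover have "v a < lam * T (\<lambda>b. lam * u b) a"
    using T_subhomogeneous[OF u lam a] cycle(1) by simp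
  ultimately show ?thesis by linarith
qed

text \<open>Hence the largest ratio upper/lower over the finite set D cannot exceed 1.\<close>

lemma upper_le_lower: "upper \<le> lower"
proof -
  define lam where "lam = Max (insert 1 ((\<lambda>a. upper a / lower a) ` D))"
  have fin: "finite (insert 1 ((\<lambda>a. upper a / lower a) ` D))" using finite_D by simp
  have ratio_le: "upper a / lower a \<le> lam" if "a \<in> D" for a
    unfolding lam_def using fin that by simp
  have off_D: "upper a = 0" "lower a = 0" if "a \<notin> D" for a
    using that upper_in_C lower_in_C unfolding nonneg_supported_def by auto
  have le_lam: "upper \<le> (\<lambda>b. lam * lower b)"
  proof (rule le_funI)
    fix a show "upper a \<le> lam * lower a"
      using ratio_le[of a] lower_pos[of a] off_D[of a] by (cases "a \<in> D") (auto simp: divide_le_eq)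
  qed
  have "lam \<le> 1"
  proof (rule ccontr)
    assume "\<not> lam \<le> 1"
    then have lam1: "1 < lam" by simp
    have "lam \<in> insert 1 ((\<lambda>a. upper a / lower a) ` D)" unfolding lam_def using fin by (rule Max_in) simp
    then obtain a where a: "a \<in> D" "lam = upper a / lower a" using lam1 by auto
    have "upper a < lam * lower a"
      using lower_pos
      by (intro two_cycle_strict[OF lower_in_C _ upper_in_C upper_eq lower_eq lam1 le_lam a(1)]) blast
    then show False using a lower_pos[OF a(1)] by simp
  qed
  show ?thesis
  proof (rule le_funI)
    fix a
    have "lam * lower a \<le> lower a"
      using \<open>lam \<le> 1\<close> nonneg_supported_nonneg[OF lower_in_C] mult_right_mono[of lam 1 "lower a"] by simp
    moreover have "upper a \<le> lam * lower a" using le_lam by (simp add: le_fun_def)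
    ultimately show "upper a \<le> lower a" by linarith
  qed
qed

lemma lower_eq_upper: "lower = upper"
proof (rule antisym[OF _ upper_le_lower])
  show "lower \<le> upper"
    by (rule le_funI, rule LIMSEQ_le[OF lower_lim upper_lim]) (use z_even_le_odd in \<open>auto simp: le_fun_def\<close>)
qed

lemma lower_fixed: "T lower = lower"
  using upper_eq lower_eq_upper by simp

text \<open>Every orbit converges to the common limit, being squeezed between the even and the
  odd iterates of zero.\<close>

lemma iterates_converge:
  assumes y: "y \<in> C"
  shows "(\<lambda>m. (T ^^ m) y a) \<longlonglongrightarrow> lower a"
proof (rule LIMSEQ_I)
  fix r :: real assume r: "0 < r"
  obtain k1 where k1: "\<forall>k\<ge>k1. norm (z (2 * k) a - lower a) < r"
    using LIMSEQ_D[OF lower_lim r] by blast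
  obtain k2 where k2: "\<forall>k\<ge>k2. norm (z (2 * k + 1) a - lower a) < r"
    using LIMSEQ_D[OF upper_lim r] lower_eq_upper by metis
  define k where "k = max k1 k2"
  show "\<exists>N. \<forall>m\<ge>N. norm ((T ^^ m) y a - lower a) < r"
  proof (intro exI allI impI)
    fix m assume "2 * k + 1 \<le> m"
    then have "z (2 * k) a \<le> (T ^^ m) y a" "(T ^^ m) y a \<le> z (2 * k + 1) a"
      using iterate_bracket[OF y] by (auto simp: le_fun_def)
    moreover have "norm (z (2 * k) a - lower a) < r" "norm (z (2 * k + 1) a - lower a) < r"
      using k1 k2 unfolding k_def by auto
    ultimately show "norm ((T ^^ m) y a - lower a) < r" by auto
  qed
qed

theorem unique_attracting_fixed_point:
  "\<exists>x. x \<in> C \<and> x = T x \<and> (\<forall>y\<in>C. y = T y \<longrightarrow> y = x)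
      \<and> (\<forall>y\<in>C. \<forall>a. (\<lambda>k. (T ^^ k) y a) \<longlonglongrightarrow> x a)"
proof (intro exI conjI ballI allI impI)
  fix y assume y: "y \<in> C" "y = T y"
  show "y = lower"
  proof
    fix a
    have "(T ^^ k) y = y" for k by (induction k) (use y in auto)
    then show "y a = lower a" using iterates_converge[OF y(1), of a] by (simp add: LIMSEQ_const_iff)
  qed
qed (use lower_in_C lower_fixed iterates_converge in auto)

end

section \<open>The cavity operator of a network\<close>

lemma other_end_eq: "i \<noteq> k \<Longrightarrow> other_end i {i, k} = k"
  unfolding other_end_def by (rule the_equality) (auto simp: doubleton_eq_iff)

lemma incident_arc:
  assumes g: "finite_simple_graph V E" and ed: "ed \<in> incident E i"
  shows "(other_end i ed, i) \<in> arcs E"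
proof -
  have "ed \<in> E" "i \<in> ed" using ed unfolding incident_def by auto
  then obtain k where "ed = {i, k}" "i \<noteq> k"
    using g unfolding finite_simple_graph_def by (metis insert_commute insert_iff singletonD)
  then show ?thesis using \<open>ed \<in> E\<close> unfolding arcs_def by (simp add: other_end_eq insert_commute)
qed

lemma arc_incident:
  assumes g: "finite_simple_graph V E" and a: "(i, j) \<in> arcs E"
  shows "i \<in> V" "{i, j} \<in> incident E i"
proof -
  have "{i, j} \<in> E" using a unfolding arcs_def by auto
  then show "i \<in> V" using g unfolding finite_simple_graph_def by (metis doubleton_eq_iff)
  show "{i, j} \<in> incident E i" using \<open>{i, j} \<in> E\<close> unfolding incident_def by auto
qed

lemma finite_arcs:
  assumes g: "finite_simple_graph V E" shows "finite (arcs E)"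
proof -
  have "arcs E \<subseteq> V \<times> V"
    using g unfolding arcs_def finite_simple_graph_def by (auto simp: doubleton_eq_iff)
  then show ?thesis using g unfolding finite_simple_graph_def by (meson finite_SigmaI finite_subset)
qed

text \<open>The messages x_{k->i} arriving at vertex i, indexed by the edges incident to i; they
  are the weights of the local measure mu_i.\<close>

definition incoming :: "('v \<times> 'v \<Rightarrow> real) \<Rightarrow> 'v \<Rightarrow> 'v set \<Rightarrow> real" where
  "incoming x i = (\<lambda>ed. x (other_end i ed, i))"

lemma scaled_cavity_op_arc:
  "(i, j) \<in> arcs E \<Longrightarrow> scaled_cavity_op t E mu x (i, j)
     = t * cavity_ratio (mu i) (incident E i) {i, j} (incoming x i)"
  unfolding scaled_cavity_op_def cavity_op_def incoming_def by simp

lemma scaled_cavity_op_off: "a \<notin> arcs E \<Longrightarrow> scaled_cavity_op t E mu x a = 0"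
  unfolding scaled_cavity_op_def cavity_op_def by (cases a) simp

lemma configs_eq: "configs E = nonneg_supported (arcs E)"
  unfolding configs_def nonneg_supported_def ..

context
  fixes V :: "'v set" and E :: "'v set set" and mu :: "'v \<Rightarrow> 'v set set \<Rightarrow> real" and t :: real
  assumes g: "finite_simple_graph V E"
    and cm: "\<forall>i\<in>V. cavity_monotone (mu i) (incident E i)" and t: "0 < t"
begin

private lemma arc_local:
  assumes "(i, j) \<in> arcs E"
  shows "cavity_monotone (mu i) (incident E i)" "{i, j} \<in> incident E i"
  using cm arc_incident[OF g assms] by auto

private lemma incoming_nonneg:
  "x \<in> nonneg_supported (arcs E) \<Longrightarrow> \<forall>ed\<in>incident E i - {e}. 0 \<le> incoming x i ed"
  unfolding incoming_def by (simp add: nonneg_supported_nonneg)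

lemma cavity_op_pos:
  assumes x: "x \<in> nonneg_supported (arcs E)" and a: "(i, j) \<in> arcs E"
  shows "0 < scaled_cavity_op t E mu x (i, j)"
  using cavity_ratio_pos[OF arc_local[OF a] incoming_nonneg[OF x]] t
  unfolding scaled_cavity_op_arc[OF a] by simp

lemma cavity_op_closed:
  assumes x: "x \<in> nonneg_supported (arcs E)"
  shows "scaled_cavity_op t E mu x \<in> nonneg_supported (arcs E)"
  unfolding nonneg_supported_def
proof (intro CollectI conjI ballI allI impI)
  fix a assume "a \<in> arcs E"
  then show "0 \<le> scaled_cavity_op t E mu x a"
    using cavity_op_pos[OF x] by (cases a) (auto intro: less_imp_le)
qed (rule scaled_cavity_op_off)

lemma cavity_op_antitone:
  assumes x: "x \<in> nonneg_supported (arcs E)" and le: "x \<le> y"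
  shows "scaled_cavity_op t E mu y \<le> scaled_cavity_op t E mu x"
proof (rule le_funI)
  fix a show "scaled_cavity_op t E mu y a \<le> scaled_cavity_op t E mu x a"
  proof (cases "a \<in> arcs E")
    case True
    then obtain i j where a: "a = (i, j)" "(i, j) \<in> arcs E" by (cases a) auto
    have "cavity_ratio (mu i) (incident E i) {i, j} (incoming y i)
        \<le> cavity_ratio (mu i) (incident E i) {i, j} (incoming x i)"
      using le by (intro cavity_ratio_antitone[OF arc_local[OF a(2)] incoming_nonneg[OF x]])
        (auto simp: incoming_def le_fun_def)
    then show ?thesis using t unfolding a(1) scaled_cavity_op_arc[OF a(2)] by simp
  qed (simp add: scaled_cavity_op_off)
qed

lemma cavity_op_continuous:
  assumes x: "x \<in> nonneg_supported (arcs E)" and lim: "\<And>a. (\<lambda>k. xs k a) \<longlonglongrightarrow> x a"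
  shows "(\<lambda>k. scaled_cavity_op t E mu (xs k) a) \<longlonglongrightarrow> scaled_cavity_op t E mu x a"
proof (cases "a \<in> arcs E")
  case True
  then obtain i j where a: "a = (i, j)" "(i, j) \<in> arcs E" by (cases a) auto
  have "(\<lambda>k. cavity_ratio (mu i) (incident E i) {i, j} (incoming (xs k) i))
      \<longlonglongrightarrow> cavity_ratio (mu i) (incident E i) {i, j} (incoming x i)"
    using lim unfolding incoming_def
    by (intro cavity_ratio_tendsto[OF arc_local[OF a(2)] incoming_nonneg[OF x, unfolded incoming_def]]) auto
  then show ?thesis unfolding a(1) scaled_cavity_op_arc[OF a(2)] by (rule tendsto_mult_left)
qed (simp add: scaled_cavity_op_off)

lemma cavity_op_subhomogeneous:
  assumes xpos: "\<forall>a\<in>arcs E. 0 < x a" and lam: "1 < lam" and a: "(i, j) \<in> arcs E"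
  shows "scaled_cavity_op t E mu x (i, j) < lam * scaled_cavity_op t E mu (\<lambda>b. lam * x b) (i, j)"
proof -
  have "\<forall>ed\<in>incident E i - {{i, j}}. 0 < incoming x i ed"
    using xpos incident_arc[OF g] unfolding incoming_def by auto
  then have "cavity_ratio (mu i) (incident E i) {i, j} (incoming x i)
      < lam * cavity_ratio (mu i) (incident E i) {i, j} (\<lambda>ed. lam * incoming x i ed)"
    by (rule cavity_ratio_strict_subhomogeneous[OF arc_local[OF a] _ lam])
  then show ?thesis using t unfolding scaled_cavity_op_arc[OF a] by (simp add: incoming_def)
qed

lemma cavity_network_antitone_subhomogeneous:
  "antitone_subhomogeneous (arcs E) (scaled_cavity_op t E mu)"
proof
  show "finite (arcs E)" by (rule finite_arcs[OF g])
  fix x assume x: "x \<in> nonneg_supported (arcs E)"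
  show "scaled_cavity_op t E mu x \<in> nonneg_supported (arcs E)" by (rule cavity_op_closed[OF x])
  show "0 < scaled_cavity_op t E mu x a" if "a \<in> arcs E" for a
    using cavity_op_pos[OF x] that by (cases a) simp
  show "scaled_cavity_op t E mu y \<le> scaled_cavity_op t E mu x" if "x \<le> y" for y
    by (rule cavity_op_antitone[OF x that])
  show "(\<lambda>k. scaled_cavity_op t E mu (xs k) a) \<longlonglongrightarrow> scaled_cavity_op t E mu x a"
    if "\<And>a. (\<lambda>k. xs k a) \<longlonglongrightarrow> x a" for xs a
    by (rule cavity_op_continuous[OF x that])
  show "scaled_cavity_op t E mu x a < lam * scaled_cavity_op t E mu (\<lambda>b. lam * x b) a"
    if "\<forall>a\<in>arcs E. 0 < x a" "1 < lam" "a \<in> arcs E" for lam a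
    using cavity_op_subhomogeneous[OF that(1,2)] that(3) by (cases a) simp
qed

end

theorem mainTheorem4:
  fixes V :: "'v set" and E :: "'v set set" and mu :: "'v \<Rightarrow> 'v set set \<Rightarrow> real" and t :: real
  assumes "finite_simple_graph V E"
    and "\<forall>i\<in>V. cavity_monotone (mu i) (incident E i)"
    and "t > 0"
  shows "\<exists>x. x \<in> configs E \<and> x = scaled_cavity_op t E mu x
           \<and> (\<forall>y\<in>configs E. y = scaled_cavity_op t E mu y \<longrightarrow> y = x)
           \<and> (\<forall>x0\<in>configs E. \<forall>a.
                (\<lambda>k. ((scaled_cavity_op t E mu) ^^ k) x0 a) \<longlonglongrightarrow> x a)"
proof -
  interpret antitone_subhomogeneous "arcs E" "scaled_cavity_op t E mu"
    by (rule cavity_network_antitone_subhomogeneous[OF assms])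
  show ?thesis using unique_attracting_fixed_point unfolding configs_eq .
qed

end
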